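(* For all $r\ge3$ and all $N$, $$\operatorname{Im}\Big(\phi^{(r-1)}_{N,r}\circ\phi^{(r-2)}_{N,r}|_{\mathbf W_{N,r}}\circ\cdots\circ\phi^{(2)}_{N,r}|_{\mathbf W_{N,r}}\Big)\subseteq\ker\phi^{(r)}_{N,r}\cap\operatorname{Im}\Big(\phi^{(r-1)}_{N,r}\circ\cdots\circ\phi^{(2)}_{N,r}\Big),$$ where the left-hand composition is applied to $\mathbf W_{N,r}$ (for $r=3$ it is $\phi^{(2)}_{N,3}$ applied to $\mathbf W_{N,3}$), and the right-hand composition is applied to $\mathbf V_{N,r}$.
   Context: For integers $N,r\ge1$ let $S_{N,r}=\{(n_1,\dots,n_r)\in\mathbb Z^r:\ n_1+\dots+n_r=N,\ \text{each } n_i\ge3 \text{ odd}\}$; when used as an index set it is ordered lexicographically decreasingly. $\mathbf V_{N,r}$ is the $\mathbb Q$-span of the monomials $x_1^{n_1-1}\cdots x_r^{n_r-1}$ with $(n_1,\dots,n_r)\in S_{N,r}$. $\mathsf{Vect}_{N,r}=\mathbb Q^{S_{N,r}}$ (row vectors), and $\pi:\mathbf V_{N,r}\to\mathsf{Vect}_{N,r}$ is the isomorphism sending $\sum a_{n_1,\dots,n_r}x_1^{n_1-1}\cdots x_r^{n_r-1}$ to $(a_{n_1,\dots,n_r})_{(n_1,\dots,n_r)\in S_{N,r}}$. For $r\ge2$, $\mathbf W_{N,r}=\{P\in\mathbf V_{N,r}: P(x_1,\dots,x_r)=P(x_2-x_1,x_2,x_3,\dots,x_r)-P(x_2-x_1,x_1,x_3,\dots,x_r)\}$.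 Ihara action: for $f\in\mathbb Q[t]$ and a polynomial $g$ in $r-1$ variables, $(f\mathbin{\underline\circ}g)(x_1,\dots,x_r)=f(x_1)g(x_2,\dots,x_r)+\sum_{i=1}^{r-1}\big(f(x_{i+1}-x_i)g(x_1,\dots,\widehat{x_{i+1}},\dots,x_r)-(-1)^{\deg f}f(x_i-x_{i+1})g(x_1,\dots,\widehat{x_i},\dots,x_r)\big)$ (hats denote omitted variables). For positive integers $m_i,n_i$, $e\binom{m_1,\dots,m_r}{n_1,\dots,n_r}$ is the coefficient of $x_1^{n_1-1}\cdots x_r^{n_r-1}$ in $t^{m_1-1}\mathbin{\underline\circ}\,(y_1^{m_2-1}\cdots y_{r-1}^{m_r-1})$. $E_{N,r}$ is the $S_{N,r}\times S_{N,r}$ matrix with $(m,n)$-entry $e\binom{m}{n}$; $F_{N,r}=E_{N,r}-\mathrm{id}$. The restricted totally even part of a polynomial is the sum of its monomials in which every variable $x_1,\dots,x_r$ occurs with even exponent $\ge2$. For $1\le j\le r$, $\phi^{(j)}_{N,r}:\mathbf V_{N,r}\to\mathbf V_{N,r}$ is the linear map sending $Q$ to the restricted totally even part of $Q(x_1,\dots,x_r)+\sum_{i=r-j+1}^{r-1}\big(Q(x_1,\dots,x_{r-j},x_{i+1}-x_i,x_{r-j+1},\dots,\widehat{x_{i+1}},\dots,x_r)-Q(x_1,\dots,x_{r-j},x_{i+1}-x_i,x_{r-j+1},\dots,\widehat{x_i},\dots,x_r)\big)$ (in each term the argument list after $x_{i+1}-x_i$ is $x_{r-j+1},\dots,x_r$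 with one variable omitted). For $2\le j\le r-2$, $\phi^{(j)}_{N,r}$ maps $\mathbf W_{N,r}$ into itself. It is known (Tasaka) that for $r\ge2$ and $P\in\mathbf W_{N,r}$, $\pi(P)F_{N,r}$ lies in the left kernel $\{v: vE_{N,r}=0\}$. *)

theory Defs
  imports Complex_Main "HOL-Library.Poly_Mapping"
begin

text \<open>Multivariate polynomials over Q in variables x_1, x_2, ... (indexed by positive
naturals): a finitely supported map from exponent vectors (finitely supported
nat \<Rightarrow> nat) to rational coefficients.\<close>

type_synonym qpoly = "(nat \<Rightarrow>\<^sub>0 nat) \<Rightarrow>\<^sub>0 rat"

definition Xv :: "nat \<Rightarrow> qpoly" where
  "Xv i = Poly_Mapping.single (Poly_Mapping.single i 1) 1"

definition subst :: "(nat \<Rightarrow> qpoly) \<Rightarrow> qpoly \<Rightarrow> qpoly" where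
  "subst \<sigma> P = (\<Sum>m\<in>Poly_Mapping.keys P. Poly_Mapping.single (0::nat \<Rightarrow>\<^sub>0 nat) (Poly_Mapping.lookup P m) *
        (\<Prod>i\<in>Poly_Mapping.keys (m::nat \<Rightarrow>\<^sub>0 nat). (\<sigma> i) ^ (Poly_Mapping.lookup m i)))"

definition subst_args :: "qpoly list \<Rightarrow> qpoly \<Rightarrow> qpoly" where
  "subst_args args = subst (\<lambda>k. if 1 \<le> k \<and> k \<le> length args then args ! (k - 1) else Xv k)"

definition S :: "nat \<Rightarrow> nat \<Rightarrow> nat list set" where
  "S N r = {n. length n = r \<and> sum_list n = N \<and> (\<forall>i<r. odd (n ! i) \<and> 3 \<le> n ! i)}"

definition mono_exp :: "nat list \<Rightarrow> (nat \<Rightarrow>\<^sub>0 nat)" where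
  "mono_exp n = (\<Sum>i<length n. Poly_Mapping.single (i + 1) (n ! i - 1))"

text \<open>V_{N,r}: the Q-span of these monomials, i.e. polynomials all of whose
monomials are among them.\<close>
definition V :: "nat \<Rightarrow> nat \<Rightarrow> qpoly set" where
  "V N r = {P. Poly_Mapping.keys P \<subseteq> mono_exp ` S N r}"

definition W :: "nat \<Rightarrow> nat \<Rightarrow> qpoly set" where
  "W N r = {P \<in> V N r.
     P = subst (\<lambda>k. if k = 1 then Xv 2 - Xv 1 else Xv k) P
       - subst (\<lambda>k. if k = 1 then Xv 2 - Xv 1 else if k = 2 then Xv 1 else Xv k) P}"

definition rte :: "nat \<Rightarrow> qpoly \<Rightarrow> qpoly" where
  "rte r P = (\<Sum>m\<in>Poly_Mapping.keys P.
      if (\<forall>i\<in>{1..r}. even (Poly_Mapping.lookup m i) \<and> 2 \<le> Poly_Mapping.lookup m i)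
      then Poly_Mapping.single m (Poly_Mapping.lookup P m) else 0)"

definition phi_args :: "nat \<Rightarrow> nat \<Rightarrow> nat \<Rightarrow> nat \<Rightarrow> qpoly list" where
  "phi_args r j i d = map Xv [1..<r - j + 1] @ [Xv (i + 1) - Xv i]
       @ map Xv (remove1 d [r - j + 1..<r + 1])"

definition phi :: "nat \<Rightarrow> nat \<Rightarrow> qpoly \<Rightarrow> qpoly" where
  "phi r j Q = rte r (Q + (\<Sum>i\<in>{r - j + 1..r - 1}.
       subst_args (phi_args r j i (i + 1)) Q - subst_args (phi_args r j i i) Q))"

definition phi_comp :: "nat \<Rightarrow> qpoly \<Rightarrow> qpoly" where
  "phi_comp r Q = fold (\<lambda>j. phi r j) [2..<r] Q"

end

theory Submission
  imports Defs
begin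

text \<open>
  Write \<open>\<phi>\<^sup>(\<^sup>j\<^sup>)\<close> as \<open>rte\<close> applied to the untruncated sum \<open>\<psi>\<^bsub>r-j\<^esub>\<close>. While the argument
  is even in \<open>x\<^bsub>r-j+1\<^esub>\<close>, a monomial that is not totally even contributes the same totally even
  part to both substitutions of each difference term, so the intermediate truncations can be
  dropped: \<open>\<phi>\<^sup>(\<^sup>r\<^sup>)\<close> applied to the left-hand side becomes \<open>rte (\<psi>\<^sub>0 (\<psi>\<^sub>1 Y))\<close> with
  \<open>Y = \<psi>\<^sub>2 (\<dots> (\<psi>\<^bsub>r-2\<^esub> P))\<close>. The \<open>W\<close>-relation, antisymmetry in \<open>x\<^sub>1, x\<^sub>2\<close> (which every element
  of \<open>W\<close> has, being even in \<open>x\<^sub>1\<close>), evenness and homogeneity are eigen-conditions of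
  substitutions commuting with those in \<open>\<psi>\<^sub>s\<close>, \<open>s \<ge> 2\<close>, so \<open>Y\<close> keeps them; and for such \<open>Y\<close> the
  terms of \<open>\<psi>\<^sub>0 (\<psi>\<^sub>1 Y)\<close> cancel in pairs.
\<close>

section \<open>Substitution\<close>

abbreviation const_poly :: "rat \<Rightarrow> qpoly" where
  "const_poly c \<equiv> Poly_Mapping.single 0 c"

definition subst_monom :: "(nat \<Rightarrow> qpoly) \<Rightarrow> (nat \<Rightarrow>\<^sub>0 nat) \<Rightarrow> qpoly" where
  "subst_monom \<sigma> m = (\<Prod>i\<in>Poly_Mapping.keys m. \<sigma> i ^ Poly_Mapping.lookup m i)"

lemma subst_eq_sum_monom:
  "subst \<sigma> P = (\<Sum>m\<in>Poly_Mapping.keys P. const_poly (Poly_Mapping.lookup P m) * subst_monom \<sigma> m)"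
  by (simp add: subst_def subst_monom_def)

lemma subst_monom_superset:
  assumes "finite K" "Poly_Mapping.keys m \<subseteq> K"
  shows "subst_monom \<sigma> m = (\<Prod>i\<in>K. \<sigma> i ^ Poly_Mapping.lookup m i)"
  unfolding subst_monom_def
  by (rule prod.mono_neutral_left) (use assms in \<open>auto simp: in_keys_iff\<close>)

lemma subst_monom_add: "subst_monom \<sigma> (m + n) = subst_monom \<sigma> m * subst_monom \<sigma> n"
proof -
  let ?K = "Poly_Mapping.keys m \<union> Poly_Mapping.keys n"
  have "subst_monom \<sigma> (m + n) = (\<Prod>i\<in>?K. \<sigma> i ^ Poly_Mapping.lookup (m + n) i)"
    by (rule subst_monom_superset) (simp_all add: keys_add)
  also have "\<dots> = (\<Prod>i\<in>?K. \<sigma> i ^ Poly_Mapping.lookup m i) * (\<Prod>i\<in>?K. \<sigma> i ^ Poly_Mapping.lookup n i)"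
    by (simp add: lookup_add power_add prod.distrib)
  also have "\<dots> = subst_monom \<sigma> m * subst_monom \<sigma> n"
    by (simp add: subst_monom_superset[of ?K])
  finally show ?thesis .
qed

lemma subst_superset:
  assumes "finite K" "Poly_Mapping.keys P \<subseteq> K"
  shows "subst \<sigma> P = (\<Sum>m\<in>K. const_poly (Poly_Mapping.lookup P m) * subst_monom \<sigma> m)"
  unfolding subst_eq_sum_monom
  by (rule sum.mono_neutral_left) (use assms in \<open>auto simp: in_keys_iff\<close>)

lemma subst_add: "subst \<sigma> (P + Q) = subst \<sigma> P + subst \<sigma> Q"
proof -
  let ?K = "Poly_Mapping.keys P \<union> Poly_Mapping.keys Q"
  have "subst \<sigma> (P + Q) = (\<Sum>m\<in>?K. const_poly (Poly_Mapping.lookup (P + Q) m) * subst_monom \<sigma> m)"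
    by (rule subst_superset) (simp_all add: keys_add)
  also have "\<dots> = (\<Sum>m\<in>?K. const_poly (Poly_Mapping.lookup P m) * subst_monom \<sigma> m)
                + (\<Sum>m\<in>?K. const_poly (Poly_Mapping.lookup Q m) * subst_monom \<sigma> m)"
    by (simp add: lookup_add single_add distrib_right sum.distrib)
  also have "\<dots> = subst \<sigma> P + subst \<sigma> Q"
    by (simp add: subst_superset[of ?K])
  finally show ?thesis .
qed

lemma subst_zero [simp]: "subst \<sigma> 0 = 0"
  by (simp add: subst_def)

lemma subst_uminus: "subst \<sigma> (- P) = - subst \<sigma> P"
  by (simp add: subst_eq_sum_monom lookup_uminus single_uminus sum_negf)

lemma subst_diff: "subst \<sigma> (P - Q) = subst \<sigma> P - subst \<sigma> Q"
  using subst_add[of \<sigma> P "- Q"] by (simp add: subst_uminus)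

lemma subst_sum: "subst \<sigma> (sum f A) = (\<Sum>a\<in>A. subst \<sigma> (f a))"
  by (induction A rule: infinite_finite_induct) (auto simp: subst_add)

lemma subst_single: "subst \<sigma> (Poly_Mapping.single m c) = const_poly c * subst_monom \<sigma> m"
  by (simp add: subst_def subst_monom_def)

lemma poly_mapping_sum_single:
  "P = (\<Sum>m\<in>Poly_Mapping.keys P. Poly_Mapping.single m (Poly_Mapping.lookup P m))"
  by (rule poly_mapping_eqI) (auto simp: lookup_sum lookup_single when_def in_keys_iff)

lemma subst_mult: "subst \<sigma> (P * Q) = subst \<sigma> P * subst \<sigma> Q"
proof -
  have "P * Q = (\<Sum>m\<in>Poly_Mapping.keys P. \<Sum>n\<in>Poly_Mapping.keys Q.
      Poly_Mapping.single (m + n) (Poly_Mapping.lookup P m * Poly_Mapping.lookup Q n))"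
    by (subst (1 2) poly_mapping_sum_single) (simp add: sum_product mult_single)
  then have "subst \<sigma> (P * Q) = (\<Sum>m\<in>Poly_Mapping.keys P. \<Sum>n\<in>Poly_Mapping.keys Q.
      const_poly (Poly_Mapping.lookup P m) * subst_monom \<sigma> m * (const_poly (Poly_Mapping.lookup Q n) * subst_monom \<sigma> n))"
    by (simp add: subst_sum subst_single subst_monom_add mult_single ac_simps)
  also have "\<dots> = subst \<sigma> P * subst \<sigma> Q"
    unfolding subst_eq_sum_monom by (rule sum_product[symmetric])
  finally show ?thesis .
qed

lemma subst_const [simp]: "subst \<sigma> (const_poly c) = const_poly c"
  by (simp add: subst_single subst_monom_def)

lemma subst_one [simp]: "subst \<sigma> 1 = 1"
  using subst_const[of \<sigma> 1] by simp

lemma subst_power: "subst \<sigma> (P ^ n) = subst \<sigma> P ^ n"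
  by (induction n) (auto simp: subst_mult)

lemma subst_prod: "subst \<sigma> (prod f A) = (\<Prod>a\<in>A. subst \<sigma> (f a))"
  by (induction A rule: infinite_finite_induct) (auto simp: subst_mult)

lemma subst_Xv [simp]: "subst \<sigma> (Xv i) = \<sigma> i"
  by (simp add: Xv_def subst_single subst_monom_def)

lemma subst_const_mult [simp]: "subst \<sigma> (const_poly c * P) = const_poly c * subst \<sigma> P"
  by (simp add: subst_mult)

definition subst_comp :: "(nat \<Rightarrow> qpoly) \<Rightarrow> (nat \<Rightarrow> qpoly) \<Rightarrow> nat \<Rightarrow> qpoly" where
  "subst_comp \<sigma> \<tau> k = subst \<sigma> (\<tau> k)"

lemma subst_subst: "subst \<sigma> (subst \<tau> P) = subst (subst_comp \<sigma> \<tau>) P"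
  by (simp add: subst_eq_sum_monom[of \<tau>] subst_eq_sum_monom[of "subst_comp \<sigma> \<tau>"] subst_sum
      subst_mult subst_monom_def subst_prod subst_power subst_comp_def)

lemma Xv_power: "Xv i ^ e = Poly_Mapping.single (Poly_Mapping.single i e) 1"
  by (induction e) (auto simp: Xv_def mult_single single_add[symmetric] add.commute)

lemma prod_single_one:
  "finite A \<Longrightarrow> (\<Prod>i\<in>A. Poly_Mapping.single (g i) (1::rat)) = Poly_Mapping.single (\<Sum>i\<in>A. g i) 1"
  by (induction A rule: finite_induct) (auto simp: mult_single)

lemma subst_monom_Xv: "subst_monom Xv m = Poly_Mapping.single m 1"
proof -
  have "subst_monom Xv m = Poly_Mapping.single
          (\<Sum>i\<in>Poly_Mapping.keys m. Poly_Mapping.single i (Poly_Mapping.lookup m i)) (1::rat)"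
    by (simp add: subst_monom_def Xv_power prod_single_one)
  also have "\<dots> = Poly_Mapping.single m 1"
    using poly_mapping_sum_single[of m] by simp
  finally show ?thesis .
qed

lemma lookup_const_mult:
  "Poly_Mapping.lookup (const_poly c * P) m = c * Poly_Mapping.lookup P m"
proof -
  have "const_poly c * P = (\<Sum>n\<in>Poly_Mapping.keys P. Poly_Mapping.single n (c * Poly_Mapping.lookup P n))"
    by (subst poly_mapping_sum_single) (simp add: sum_distrib_left mult_single)
  then show ?thesis
    by (auto simp: lookup_sum lookup_single when_def in_keys_iff)
qed

definition substs_commute :: "(nat \<Rightarrow> qpoly) \<Rightarrow> (nat \<Rightarrow> qpoly) \<Rightarrow> bool" where
  "substs_commute \<sigma> \<tau> \<longleftrightarrow> subst_comp \<sigma> \<tau> = subst_comp \<tau> \<sigma>"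

lemma subst_commute:
  "substs_commute \<sigma> \<tau> \<Longrightarrow> subst \<sigma> (subst \<tau> P) = subst \<tau> (subst \<sigma> P)"
  by (simp add: substs_commute_def subst_subst)

text \<open>Evenness in a variable and homogeneity are eigen-conditions of diagonal substitutions,
  so every substitution commuting with the relevant diagonal one preserves them.\<close>

lemma const_poly_power: "const_poly c ^ n = const_poly (c ^ n)"
  by (induction n) (simp_all add: mult_single)

lemma const_poly_prod: "(\<Prod>k\<in>A. const_poly (f k)) = const_poly (\<Prod>k\<in>A. f k)"
  by (induction A rule: infinite_finite_induct) (simp_all add: mult_single)

lemma const_poly_minus_one_mult [simp]: "const_poly (- 1) * P = - P"
  by (metis mult_minus_left mult_1 single_uminus single_one)

definition diag_subst :: "(nat \<Rightarrow> rat) \<Rightarrow> nat \<Rightarrow> qpoly" where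
  "diag_subst c k = const_poly (c k) * Xv k"

lemma subst_monom_diag:
  "subst_monom (diag_subst c) m
     = const_poly (\<Prod>k\<in>Poly_Mapping.keys m. c k ^ Poly_Mapping.lookup m k) * Poly_Mapping.single m 1"
proof -
  have "subst_monom (diag_subst c) m = (\<Prod>k\<in>Poly_Mapping.keys m.
          const_poly (c k ^ Poly_Mapping.lookup m k) * Xv k ^ Poly_Mapping.lookup m k)"
    by (simp add: subst_monom_def diag_subst_def power_mult_distrib const_poly_power)
  also have "\<dots> = const_poly (\<Prod>k\<in>Poly_Mapping.keys m. c k ^ Poly_Mapping.lookup m k) * subst_monom Xv m"
    by (simp add: prod.distrib const_poly_prod subst_monom_def)
  finally show ?thesis by (simp add: subst_monom_Xv)
qed

lemma lookup_subst_diag: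
  "Poly_Mapping.lookup (subst (diag_subst c) P) m
     = (\<Prod>k\<in>Poly_Mapping.keys m. c k ^ Poly_Mapping.lookup m k) * Poly_Mapping.lookup P m"
  by (auto simp: subst_eq_sum_monom subst_monom_diag lookup_sum mult_single lookup_single when_def
      in_keys_iff intro: sum.neutral)

definition negate_var :: "nat \<Rightarrow> nat \<Rightarrow> qpoly" where
  "negate_var v = diag_subst (\<lambda>k. if k = v then -1 else 1)"

definition even_in :: "nat \<Rightarrow> qpoly \<Rightarrow> bool" where
  "even_in v P \<longleftrightarrow> (\<forall>m\<in>Poly_Mapping.keys P. even (Poly_Mapping.lookup m v))"

lemma even_in_iff_subst_negate_var: "even_in v P \<longleftrightarrow> subst (negate_var v) P = P"
proof -
  have factor: "(\<Prod>k\<in>Poly_Mapping.keys m. (if k = v then -1 else 1) ^ Poly_Mapping.lookup m k)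
      = (-1 :: rat) ^ Poly_Mapping.lookup m v" for m
  proof -
    have "(\<Prod>k\<in>Poly_Mapping.keys m. (if k = v then -1 else 1) ^ Poly_Mapping.lookup m k)
        = (\<Prod>k\<in>Poly_Mapping.keys m. if k = v then (-1 :: rat) ^ Poly_Mapping.lookup m k else 1)"
      by (rule prod.cong) auto
    then show ?thesis
      by (simp add: in_keys_iff)
  qed
  have "subst (negate_var v) P = P \<longleftrightarrow>
      (\<forall>m. (-1 :: rat) ^ Poly_Mapping.lookup m v * Poly_Mapping.lookup P m = Poly_Mapping.lookup P m)"
    by (simp add: poly_mapping_eq_iff fun_eq_iff lookup_subst_diag negate_var_def factor)
  also have "\<dots> \<longleftrightarrow> even_in v P"
    by (auto simp: even_in_def in_keys_iff minus_one_power_iff)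
  finally show ?thesis by simp
qed

definition scale_subst :: "nat set \<Rightarrow> nat \<Rightarrow> qpoly" where
  "scale_subst A = diag_subst (\<lambda>k. if k \<in> A then 2 else 0)"

lemma scale_subst_mem: "k \<in> A \<Longrightarrow> scale_subst A k = 2 * Xv k"
  by (simp add: scale_subst_def diag_subst_def)

definition homogeneous :: "nat set \<Rightarrow> nat \<Rightarrow> qpoly \<Rightarrow> bool" where
  "homogeneous A d P \<longleftrightarrow>
     (\<forall>m\<in>Poly_Mapping.keys P. Poly_Mapping.keys m \<subseteq> A \<and> (\<Sum>k\<in>A. Poly_Mapping.lookup m k) = d)"

lemma homogeneous_iff_subst_scale:
  assumes "finite A"
  shows "homogeneous A d P \<longleftrightarrow> subst (scale_subst A) P = const_poly (2 ^ d) * P"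
proof -
  have factor: "(\<Prod>k\<in>Poly_Mapping.keys m. (if k \<in> A then 2 else 0) ^ Poly_Mapping.lookup m k)
      = (if Poly_Mapping.keys m \<subseteq> A then (2 :: rat) ^ (\<Sum>k\<in>A. Poly_Mapping.lookup m k) else 0)" for m
  proof (cases "Poly_Mapping.keys m \<subseteq> A")
    case True
    then have "(\<Sum>k\<in>Poly_Mapping.keys m. Poly_Mapping.lookup m k) = (\<Sum>k\<in>A. Poly_Mapping.lookup m k)"
      by (intro sum.mono_neutral_left) (auto simp: assms in_keys_iff)
    moreover have "(\<Prod>k\<in>Poly_Mapping.keys m. (if k \<in> A then 2 else 0) ^ Poly_Mapping.lookup m k)
        = (\<Prod>k\<in>Poly_Mapping.keys m. (2 :: rat) ^ Poly_Mapping.lookup m k)"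
      using True by (intro prod.cong) auto
    ultimately show ?thesis
      using True by (simp add: power_sum[symmetric] del: power_sum)
  next
    case False
    then obtain k where "k \<in> Poly_Mapping.keys m" "k \<notin> A" by blast
    then show ?thesis
      using False by (auto simp: in_keys_iff intro!: prod_zero)
  qed
  have "subst (scale_subst A) P = const_poly (2 ^ d) * P \<longleftrightarrow>
      (\<forall>m. (if Poly_Mapping.keys m \<subseteq> A then (2 :: rat) ^ (\<Sum>k\<in>A. Poly_Mapping.lookup m k) else 0)
             * Poly_Mapping.lookup P m = 2 ^ d * Poly_Mapping.lookup P m)"
    by (simp add: poly_mapping_eq_iff fun_eq_iff lookup_subst_diag lookup_const_mult
        scale_subst_def factor)
  also have "\<dots> \<longleftrightarrow> homogeneous A d P"
    by (auto simp: homogeneous_def in_keys_iff)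
  finally show ?thesis by simp
qed

section \<open>The untruncated operator \<open>\<psi>\<close>\<close>

text \<open>Only \<open>d = i\<close> and \<open>d = i + 1\<close> occur.\<close>

definition phi_subst :: "nat \<Rightarrow> nat \<Rightarrow> nat \<Rightarrow> nat \<Rightarrow> qpoly" where
  "phi_subst s i d k = (if k \<le> s then Xv k else if k = Suc s then Xv (Suc i) - Xv i
     else if k \<le> d then Xv (k - 1) else Xv k)"

definition psi_term :: "nat \<Rightarrow> nat \<Rightarrow> qpoly \<Rightarrow> qpoly" where
  "psi_term s i Q = subst (phi_subst s i (Suc i)) Q - subst (phi_subst s i i) Q"

definition psi :: "nat \<Rightarrow> nat \<Rightarrow> qpoly \<Rightarrow> qpoly" where
  "psi s n Q = Q + (\<Sum>i\<in>{Suc s..n - 1}. psi_term s i Q)"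

lemma upt_append: "i \<le> j \<Longrightarrow> j \<le> k \<Longrightarrow> [i..<j] @ [j..<k] = [i..<k]"
  using upt_add_eq_append[of i j "k - j"] by simp

lemma remove1_upt: "a \<le> d \<Longrightarrow> d < b \<Longrightarrow> remove1 d [a..<b] = [a..<d] @ [Suc d..<b]"
  by (simp add: upt_append[of a d b, symmetric] upt_conv_Cons[of d b] remove1_append del: upt_Suc)

lemma phi_args_eq_map:
  assumes "r - j < d" "d \<le> r"
  shows "phi_args r j i d = map (phi_subst (r - j) i d) [1..<Suc r]"
proof -
  define s where "s = r - j"
  have "s < d" using assms s_def by simp
  have "[1..<Suc r] = [1..<s + 1] @ Suc s # [Suc (Suc s)..<Suc d] @ [Suc d..<Suc r]"
  proof -
    have "s < r" using assms s_def by auto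
    with \<open>s < d\<close> show ?thesis
      using assms upt_append[of 1 "Suc s" "Suc r"] upt_conv_Cons[of "Suc s" "Suc r"]
        upt_append[of "Suc (Suc s)" "Suc d" "Suc r"]
      by (simp del: upt_Suc)
  qed
  moreover have "map (phi_subst s i d) [1..<s + 1] = map Xv [1..<s + 1]"
    by (simp add: phi_subst_def del: upt_Suc)
  moreover have "map (phi_subst s i d) [Suc (Suc s)..<Suc d] = map Xv [Suc s..<d]"
  proof -
    have "map (phi_subst s i d) [Suc (Suc s)..<Suc d] = map (\<lambda>k. Xv (k - 1)) [Suc (Suc s)..<Suc d]"
      by (simp add: phi_subst_def del: upt_Suc)
    also have "\<dots> = map Xv [Suc s..<d]"
      by (simp add: map_Suc_upt[symmetric] del: upt_Suc)
    finally show ?thesis .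
  qed
  moreover have "map (phi_subst s i d) [Suc d..<Suc r] = map Xv [Suc d..<Suc r]"
    using \<open>s < d\<close> by (simp add: phi_subst_def del: upt_Suc)
  moreover have "phi_subst s i d (Suc s) = Xv (Suc i) - Xv i"
    by (simp add: phi_subst_def)
  ultimately show ?thesis
    using assms unfolding phi_args_def s_def[symmetric]
    by (simp add: remove1_upt del: upt_Suc)
qed

lemma subst_args_map_upt:
  assumes "\<And>k. k = 0 \<or> r < k \<Longrightarrow> f k = Xv k"
  shows "subst_args (map f [1..<Suc r]) = subst f"
proof -
  have "(if 1 \<le> k \<and> k \<le> r then map f [1..<Suc r] ! (k - 1) else Xv k) = f k" for k
    using assms[of k] nth_map_upt[of "k - 1" "Suc r" 1 f] by (cases "1 \<le> k \<and> k \<le> r") auto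
  then have "(\<lambda>k. if 1 \<le> k \<and> k \<le> r then map f [1..<Suc r] ! (k - 1) else Xv k) = f"
    by blast
  moreover have "length (map f [1..<Suc r]) = r" by simp
  ultimately show ?thesis
    unfolding subst_args_def by simp
qed

lemma phi_eq_rte_psi:
  assumes "j \<le> r"
  shows "phi r j Q = rte r (psi (r - j) r Q)"
proof -
  have "subst_args (phi_args r j i d) = subst (phi_subst (r - j) i d)"
    if "i \<in> {r - j + 1..r - 1}" "d = i \<or> d = Suc i" for i d
  proof -
    have "phi_args r j i d = map (phi_subst (r - j) i d) [1..<Suc r]"
      using that assms by (intro phi_args_eq_map) auto
    also have "subst_args \<dots> = subst (phi_subst (r - j) i d)"
      using that by (intro subst_args_map_upt) (auto simp: phi_subst_def)
    finally show ?thesis .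
  qed
  then show ?thesis
    unfolding phi_def psi_def psi_term_def by (intro arg_cong[where f = "rte r"] sum.cong) auto
qed

lemma psi_term_add: "psi_term s i (P + Q) = psi_term s i P + psi_term s i Q"
  by (simp add: psi_term_def subst_add)

lemma psi_term_diff: "psi_term s i (P - Q) = psi_term s i P - psi_term s i Q"
  by (simp add: psi_term_def subst_diff)

lemma psi_term_sum: "psi_term s i (sum f A) = (\<Sum>a\<in>A. psi_term s i (f a))"
  by (simp add: psi_term_def subst_sum sum_subtractf)

lemma psi_add: "psi s n (P + Q) = psi s n P + psi s n Q"
  by (simp add: psi_def psi_term_add sum.distrib)

lemma psi_diff: "psi s n (P - Q) = psi s n P - psi s n Q"
  by (simp add: psi_def psi_term_diff sum_subtractf)

lemma psi_uminus: "psi s n (- P) = - psi s n P"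
  using psi_diff[of s n 0 P] by (simp add: psi_def psi_term_def)

lemma psi_const_mult: "psi s n (const_poly c * Q) = const_poly c * psi s n Q"
  by (simp add: psi_def psi_term_def subst_mult distrib_left sum_distrib_left right_diff_distrib)

lemma psi_Suc: "Suc s \<le> n \<Longrightarrow> psi s (Suc n) Q = psi s n Q + psi_term s n Q"
  by (cases n) (auto simp: psi_def add.assoc)

lemma subst_psi_commute:
  assumes "\<And>i d. s < i \<Longrightarrow> i < n \<Longrightarrow> d = i \<or> d = Suc i \<Longrightarrow> substs_commute \<tau> (phi_subst s i d)"
  shows "subst \<tau> (psi s n Q) = psi s n (subst \<tau> Q)"
proof -
  have "subst \<tau> (psi_term s i Q) = psi_term s i (subst \<tau> Q)" if "i \<in> {Suc s..n - 1}" for i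
  proof -
    have "s < i" "i < n" using that by auto
    then show ?thesis
      using subst_commute[OF assms] by (simp add: psi_term_def subst_diff)
  qed
  then show ?thesis
    by (simp add: psi_def subst_add subst_sum)
qed

definition W_subst1 :: "nat \<Rightarrow> qpoly" where
  "W_subst1 k = (if k = 1 then Xv 2 - Xv 1 else Xv k)"

definition W_subst2 :: "nat \<Rightarrow> qpoly" where
  "W_subst2 k = (if k = 1 then Xv 2 - Xv 1 else if k = 2 then Xv 1 else Xv k)"

definition swap12 :: "nat \<Rightarrow> qpoly" where
  "swap12 k = (if k = 1 then Xv 2 else if k = 2 then Xv 1 else Xv k)"

definition W_rel :: "qpoly \<Rightarrow> bool" where
  "W_rel Y \<longleftrightarrow> Y = subst W_subst1 Y - subst W_subst2 Y"

definition antisymmetric12 :: "qpoly \<Rightarrow> bool" where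
  "antisymmetric12 Y \<longleftrightarrow> subst swap12 Y = - Y"

lemma W_imp_W_rel: "P \<in> W N r \<Longrightarrow> W_rel P"
  unfolding W_def W_rel_def W_subst1_def[abs_def] W_subst2_def[abs_def] by simp

lemma W_rel_imp_antisymmetric12:
  assumes W: "W_rel P" and even: "even_in 1 P"
  shows "antisymmetric12 P"
proof -
  have swap_W1: "subst_comp swap12 W_subst1 = subst_comp W_subst2 (negate_var 1)"
    and swap_W2: "subst_comp swap12 W_subst2 = subst_comp W_subst1 (negate_var 1)"
    by (auto simp: fun_eq_iff subst_comp_def swap12_def W_subst1_def W_subst2_def negate_var_def
        diag_subst_def subst_diff)
  have negate: "subst (negate_var 1) P = P"
    using even by (simp add: even_in_iff_subst_negate_var)
  from W have "subst swap12 P = subst swap12 (subst W_subst1 P - subst W_subst2 P)"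
    unfolding W_rel_def by (rule arg_cong)
  also have "\<dots> = subst W_subst2 (subst (negate_var 1) P) - subst W_subst1 (subst (negate_var 1) P)"
    by (simp only: subst_diff subst_subst swap_W1 swap_W2)
  also have "\<dots> = - (subst W_subst1 P - subst W_subst2 P)"
    unfolding negate by simp
  also have "\<dots> = - P"
    using W unfolding W_rel_def by (rule arg_cong[symmetric])
  finally show ?thesis unfolding antisymmetric12_def .
qed

lemma psi_W_rel:
  assumes "2 \<le> s" and W: "W_rel Q"
  shows "W_rel (psi s n Q)"
proof -
  have "substs_commute W_subst1 (phi_subst s i d)" "substs_commute W_subst2 (phi_subst s i d)"
    if "s < i" for i d
    using assms that by (auto simp: substs_commute_def fun_eq_iff subst_comp_def W_subst1_def
        W_subst2_def phi_subst_def subst_diff)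
  then have commute: "subst W_subst1 (psi s n Q) = psi s n (subst W_subst1 Q)"
    "subst W_subst2 (psi s n Q) = psi s n (subst W_subst2 Q)"
    by (blast intro: subst_psi_commute)+
  from W have "psi s n Q = psi s n (subst W_subst1 Q - subst W_subst2 Q)"
    unfolding W_rel_def by (rule arg_cong)
  then show ?thesis
    unfolding W_rel_def psi_diff commute .
qed

lemma psi_antisymmetric12:
  assumes "2 \<le> s" "antisymmetric12 Q"
  shows "antisymmetric12 (psi s n Q)"
proof -
  have "substs_commute swap12 (phi_subst s i d)" if "s < i" for i d
    using assms that by (auto simp: substs_commute_def fun_eq_iff subst_comp_def swap12_def
        phi_subst_def subst_diff)
  then show ?thesis
    using assms(2) unfolding antisymmetric12_def
    by (simp add: subst_psi_commute psi_uminus)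
qed

lemma psi_even_in:
  assumes "v \<le> s" "even_in v Q"
  shows "even_in v (psi s n Q)"
proof -
  have "substs_commute (negate_var v) (phi_subst s i d)" if "s < i" for i d
    using assms that by (auto simp: substs_commute_def fun_eq_iff subst_comp_def negate_var_def
        diag_subst_def phi_subst_def subst_diff)
  then show ?thesis
    using assms(2) unfolding even_in_iff_subst_negate_var
    by (simp add: subst_psi_commute)
qed

lemma psi_homogeneous:
  assumes "n \<le> r" "homogeneous {1..r} e Q"
  shows "homogeneous {1..r} e (psi s n Q)"
proof -
  have "substs_commute (scale_subst {1..r}) (phi_subst s i d)"
    if "s < i" "i < n" "d = i \<or> d = Suc i" for i d
    using assms that by (auto simp: substs_commute_def fun_eq_iff subst_comp_def scale_subst_def
        diag_subst_def phi_subst_def subst_diff right_diff_distrib)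
  then show ?thesis
    using assms(2) unfolding homogeneous_iff_subst_scale[OF finite_atLeastAtMost]
    by (simp add: subst_psi_commute psi_const_mult)
qed

lemma subst_W_rel_split:
  assumes "W_rel Y"
  shows "subst M Y = subst (M(1 := M 2 - M 1)) Y - subst (M(1 := M 2 - M 1, 2 := M 1)) Y"
proof -
  have "subst M Y = subst M (subst W_subst1 Y - subst W_subst2 Y)"
    using assms unfolding W_rel_def by (rule arg_cong)
  also have "\<dots> = subst (subst_comp M W_subst1) Y - subst (subst_comp M W_subst2) Y"
    by (simp add: subst_diff subst_subst)
  also have "subst_comp M W_subst1 = M(1 := M 2 - M 1)"
    by (auto simp: fun_eq_iff subst_comp_def W_subst1_def subst_diff)
  also have "subst_comp M W_subst2 = M(1 := M 2 - M 1, 2 := M 1)"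
    by (auto simp: fun_eq_iff subst_comp_def W_subst2_def subst_diff)
  finally show ?thesis .
qed

lemma subst_antisymmetric12_swap:
  assumes "antisymmetric12 Y"
  shows "subst (M(1 := M 2, 2 := M 1)) Y = - subst M Y"
proof -
  have "subst_comp M swap12 = M(1 := M 2, 2 := M 1)"
    by (auto simp: fun_eq_iff subst_comp_def swap12_def)
  then show ?thesis
    using arg_cong[OF assms[unfolded antisymmetric12_def], of "subst M"]
    by (simp add: subst_subst subst_uminus)
qed

lemma psi_term_psi_term:
  "psi_term a i (psi_term b j Y) =
     subst (subst_comp (phi_subst a i (Suc i)) (phi_subst b j (Suc j))) Y
   - subst (subst_comp (phi_subst a i (Suc i)) (phi_subst b j j)) Y
   - subst (subst_comp (phi_subst a i i) (phi_subst b j (Suc j))) Y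
   + subst (subst_comp (phi_subst a i i) (phi_subst b j j)) Y"
  by (simp add: psi_term_def subst_diff subst_subst)

lemma psi_term_cancel_first:
  assumes "2 \<le> n" "antisymmetric12 Y"
  shows "psi_term 1 n Y + psi_term 0 n Y = 0"
proof -
  have "phi_subst 1 n e = (phi_subst 0 n e)(1 := phi_subst 0 n e 2, 2 := phi_subst 0 n e 1)"
    if "n \<le> e" for e
    using assms that by (auto simp: fun_eq_iff phi_subst_def)
  then show ?thesis
    using subst_antisymmetric12_swap[OF assms(2)] by (simp add: psi_term_def)
qed

lemma psi_term_cancel_pair:
  assumes "1 \<le> i" "i + 2 \<le> n" "antisymmetric12 Y"
  shows "psi_term 0 i (psi_term 1 n Y) + psi_term 0 n (psi_term 1 (Suc i) Y) = 0"
proof -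
  have "subst (subst_comp (phi_subst 0 i d) (phi_subst 1 n e)) Y
      = - subst (subst_comp (phi_subst 0 n e) (phi_subst 1 (Suc i) (Suc d))) Y"
    if "d = i \<or> d = Suc i" "e = n \<or> e = Suc n" for d e
  proof -
    define M where "M = subst_comp (phi_subst 0 n e) (phi_subst 1 (Suc i) (Suc d))"
    have "subst_comp (phi_subst 0 i d) (phi_subst 1 n e) = M(1 := M 2, 2 := M 1)"
      unfolding M_def using assms that
      by (auto simp: fun_eq_iff subst_comp_def phi_subst_def subst_diff)
    then show ?thesis
      unfolding M_def using subst_antisymmetric12_swap[OF assms(3)] by simp
  qed
  then show ?thesis
    by (simp add: psi_term_psi_term)
qed

text \<open>This is the only cancellation that needs the \<open>W\<close>-relation and not just antisymmetry.\<close>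

lemma psi_term_cancel_last:
  assumes n: "2 \<le> n" and W: "W_rel Y" and anti: "antisymmetric12 Y"
  shows "psi_term 0 (n - 1) (psi_term 1 n Y) + psi_term 0 n (psi_term 1 n Y) = 0"
proof -
  define A where "A d e = subst_comp (phi_subst 0 (n - 1) d) (phi_subst 1 n e)" for d e
  define B where "B d e = subst_comp (phi_subst 0 n d) (phi_subst 1 n e)" for d e
  have "(A n (Suc n))(1 := A n (Suc n) 2 - A n (Suc n) 1) = B n (Suc n)"
    "(A n (Suc n))(1 := A n (Suc n) 2 - A n (Suc n) 1, 2 := A n (Suc n) 1) = B (Suc n) (Suc n)"
    "(A n n)(1 := A n n 2 - A n n 1) = B n n"
    "(A n n)(1 := A n n 2 - A n n 1, 2 := A n n 1) = (A (n - 1) n)(1 := A (n - 1) n 2, 2 := A (n - 1) n 1)"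
    "B (Suc n) n = (A (n - 1) (Suc n))(1 := A (n - 1) (Suc n) 2, 2 := A (n - 1) (Suc n) 1)"
    unfolding A_def B_def using n by (auto simp: fun_eq_iff subst_comp_def phi_subst_def subst_diff)
  then have "subst (A n (Suc n)) Y = subst (B n (Suc n)) Y - subst (B (Suc n) (Suc n)) Y"
    "subst (A n n) Y = subst (B n n) Y + subst (A (n - 1) n) Y"
    "subst (B (Suc n) n) Y = - subst (A (n - 1) (Suc n)) Y"
    using subst_W_rel_split[OF W, of "A n (Suc n)"] subst_W_rel_split[OF W, of "A n n"]
      subst_antisymmetric12_swap[OF anti] by simp_all
  moreover have "Suc (n - 1) = n" using n by simp
  ultimately show ?thesis
    unfolding psi_term_psi_term A_def[symmetric] B_def[symmetric] by simp
qed

lemma psi_term_cancel: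
  assumes "i \<in> {1..n - 1}" "2 \<le> n" "W_rel Y" "antisymmetric12 Y"
  shows "psi_term 0 i (psi_term 1 n Y) + psi_term 0 n (psi_term 1 (Suc i) Y) = 0"
proof (cases "i + 2 \<le> n")
  case True
  with assms show ?thesis by (intro psi_term_cancel_pair) auto
next
  case False
  with assms(1) have "i = n - 1" "Suc (n - 1) = n" by auto
  with psi_term_cancel_last[OF assms(2-4)] show ?thesis by simp
qed

lemma psi0_psi1_eq_zero:
  assumes "2 \<le> n" and W: "W_rel Y" and anti: "antisymmetric12 Y"
  shows "psi 0 n (psi 1 n Y) = 0"
  using assms(1)
proof (induction n rule: nat_induct_at_least)
  case base
  have "phi_subst 0 1 2 = W_subst2" "phi_subst 0 1 1 = W_subst1"
    by (auto simp: fun_eq_iff phi_subst_def W_subst1_def W_subst2_def numeral_2_eq_2)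
  then have "psi 0 2 (psi 1 2 Y) = Y - (subst W_subst1 Y - subst W_subst2 Y)"
    by (simp add: psi_def psi_term_def numeral_2_eq_2)
  also have "\<dots> = 0"
    using W unfolding W_rel_def by simp
  finally show ?case .
next
  case (Suc n)
  let ?T1 = "psi_term 1 n" and ?T0 = "psi_term 0 n"
  have "psi 0 (Suc n) (psi 1 (Suc n) Y) = psi 0 n (psi 1 n Y) + psi 0 n (?T1 Y) + ?T0 (psi 1 (Suc n) Y)"
    using Suc.hyps by (simp add: psi_Suc psi_add psi_term_add)
  also have "psi 0 n (?T1 Y) = ?T1 Y + (\<Sum>i\<in>{1..n - 1}. psi_term 0 i (?T1 Y))"
    by (simp add: psi_def)
  also have "?T0 (psi 1 (Suc n) Y) = ?T0 Y + (\<Sum>i\<in>{1..n - 1}. ?T0 (psi_term 1 (Suc i) Y))"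
    using Suc.hyps sum.shift_bounds_cl_Suc_ivl[of "\<lambda>k. ?T0 (psi_term 1 k Y)" 1 "n - 1"]
    by (simp add: psi_def psi_term_add psi_term_sum)
  finally have "psi 0 (Suc n) (psi 1 (Suc n) Y) = (?T1 Y + ?T0 Y)
      + (\<Sum>i\<in>{1..n - 1}. psi_term 0 i (?T1 Y) + ?T0 (psi_term 1 (Suc i) Y))"
    using Suc.IH by (simp add: sum.distrib ac_simps)
  also have "?T1 Y + ?T0 Y = 0"
    using Suc.hyps anti by (rule psi_term_cancel_first)
  also have "(\<Sum>i\<in>{1..n - 1}. psi_term 0 i (?T1 Y) + ?T0 (psi_term 1 (Suc i) Y)) = 0"
    using Suc.hyps W anti by (intro sum.neutral ballI psi_term_cancel) auto
  finally show ?case by simp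
qed


section \<open>The restricted totally even part\<close>

definition totally_even :: "nat \<Rightarrow> (nat \<Rightarrow>\<^sub>0 nat) \<Rightarrow> bool" where
  "totally_even r m \<longleftrightarrow> (\<forall>k\<in>{1..r}. even (Poly_Mapping.lookup m k) \<and> 2 \<le> Poly_Mapping.lookup m k)"

lemma lookup_rte:
  "Poly_Mapping.lookup (rte r P) m = (if totally_even r m then Poly_Mapping.lookup P m else 0)"
proof -
  have "Poly_Mapping.lookup (rte r P) m = (\<Sum>m'\<in>Poly_Mapping.keys P.
      if m' = m \<and> totally_even r m then Poly_Mapping.lookup P m else 0)"
    unfolding rte_def totally_even_def lookup_sum
    by (rule sum.cong) (auto simp: lookup_single when_def)
  then show ?thesis
    by (auto simp: in_keys_iff)
qed

lemma rte_add: "rte r (P + Q) = rte r P + rte r Q"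
  by (rule poly_mapping_eqI) (simp add: lookup_rte lookup_add)

lemma rte_diff: "rte r (P - Q) = rte r P - rte r Q"
  by (rule poly_mapping_eqI) (simp add: lookup_rte lookup_minus)

lemma rte_zero [simp]: "rte r 0 = 0"
  by (rule poly_mapping_eqI) (simp add: lookup_rte)

lemma rte_sum: "rte r (sum f A) = (\<Sum>a\<in>A. rte r (f a))"
  by (induction A rule: infinite_finite_induct) (auto simp: rte_add)

lemma rte_idem [simp]: "rte r (rte r P) = rte r P"
  by (rule poly_mapping_eqI) (simp add: lookup_rte)

lemma rte_const_mult: "rte r (const_poly c * P) = const_poly c * rte r P"
  by (rule poly_mapping_eqI) (simp add: lookup_rte lookup_const_mult)

lemma rte_eq_zero: "(\<And>m. m \<in> Poly_Mapping.keys P \<Longrightarrow> \<not> totally_even r m) \<Longrightarrow> rte r P = 0"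
  by (rule poly_mapping_eqI) (auto simp: lookup_rte in_keys_iff)

lemma rte_mult_single_eq_zero:
  assumes "\<And>g. g \<in> Poly_Mapping.keys G \<Longrightarrow> \<not> totally_even r (g + \<mu>)"
  shows "rte r (G * Poly_Mapping.single \<mu> 1) = 0"
proof (rule rte_eq_zero)
  fix m assume "m \<in> Poly_Mapping.keys (G * Poly_Mapping.single \<mu> 1)"
  then obtain g where "g \<in> Poly_Mapping.keys G" "m = g + \<mu>"
    using keys_mult[of G "Poly_Mapping.single \<mu> (1::rat)"] by auto
  then show "\<not> totally_even r m" using assms by simp
qed

lemma not_totally_evenI:
  "k \<in> {1..r} \<Longrightarrow> odd (Poly_Mapping.lookup m k) \<or> Poly_Mapping.lookup m k < 2 \<Longrightarrow> \<not> totally_even r m"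
  unfolding totally_even_def by (metis not_less)

text \<open>Away from \<open>x\<^bsub>s+1\<^esub>\<close> and \<open>x\<^bsub>i+1\<^esub>\<close>, both substitutions of \<open>psi_term s i\<close> are the
  same renaming of variables.\<close>

definition phi_index :: "nat \<Rightarrow> nat \<Rightarrow> nat \<Rightarrow> nat" where
  "phi_index s i k = (if k \<le> s then k else if k \<le> i then k - 1 else k)"

lemma phi_subst_eq_phi_index:
  "s < i \<Longrightarrow> k \<noteq> Suc s \<Longrightarrow> k \<noteq> Suc i \<Longrightarrow> d = i \<or> d = Suc i \<Longrightarrow>
    phi_subst s i d k = Xv (phi_index s i k)"
  unfolding phi_subst_def phi_index_def by auto

lemma phi_index_neq:
  "s < i \<Longrightarrow> k \<noteq> Suc s \<Longrightarrow> k \<noteq> Suc i \<Longrightarrow> phi_index s i k \<noteq> i \<and> phi_index s i k \<noteq> Suc i"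
  unfolding phi_index_def by auto

lemma phi_index_inj:
  "s < i \<Longrightarrow> k \<notin> {Suc s, Suc i} \<Longrightarrow> k' \<notin> {Suc s, Suc i} \<Longrightarrow>
    phi_index s i k = phi_index s i k' \<Longrightarrow> k = k'"
  unfolding phi_index_def by (auto split: if_splits)

lemma phi_index_range:
  "s < i \<Longrightarrow> i < r \<Longrightarrow> k \<in> {1..r} \<Longrightarrow> k \<noteq> Suc s \<Longrightarrow> phi_index s i k \<in> {1..r}"
  unfolding phi_index_def by auto

definition rest_exp :: "nat \<Rightarrow> nat \<Rightarrow> (nat \<Rightarrow>\<^sub>0 nat) \<Rightarrow> (nat \<Rightarrow>\<^sub>0 nat)" where
  "rest_exp s i m = (\<Sum>k\<in>Poly_Mapping.keys m - {Suc s, Suc i}.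
      Poly_Mapping.single (phi_index s i k) (Poly_Mapping.lookup m k))"

lemma lookup_rest_exp: "Poly_Mapping.lookup (rest_exp s i m) t =
    (\<Sum>k\<in>Poly_Mapping.keys m - {Suc s, Suc i}. if phi_index s i k = t then Poly_Mapping.lookup m k else 0)"
  unfolding rest_exp_def by (simp add: lookup_sum lookup_single when_def)

lemma lookup_rest_exp_pair:
  assumes "s < i"
  shows "Poly_Mapping.lookup (rest_exp s i m) i = 0" "Poly_Mapping.lookup (rest_exp s i m) (Suc i) = 0"
  unfolding lookup_rest_exp using phi_index_neq[OF assms] by (auto intro!: sum.neutral)

lemma lookup_rest_exp_phi_index:
  assumes "s < i" "k \<noteq> Suc s" "k \<noteq> Suc i"
  shows "Poly_Mapping.lookup (rest_exp s i m) (phi_index s i k) = Poly_Mapping.lookup m k"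
proof -
  have "Poly_Mapping.lookup (rest_exp s i m) (phi_index s i k)
      = (\<Sum>k'\<in>Poly_Mapping.keys m - {Suc s, Suc i}. if k' = k then Poly_Mapping.lookup m k' else 0)"
    unfolding lookup_rest_exp
  proof (rule sum.cong[OF refl])
    fix k' assume "k' \<in> Poly_Mapping.keys m - {Suc s, Suc i}"
    then have "phi_index s i k' = phi_index s i k \<longleftrightarrow> k' = k"
      using phi_index_inj[OF assms(1), of k' k] assms(2,3) by auto
    then show "(if phi_index s i k' = phi_index s i k then Poly_Mapping.lookup m k' else 0)
        = (if k' = k then Poly_Mapping.lookup m k' else 0)"
      by simp
  qed
  also have "\<dots> = Poly_Mapping.lookup m k"
    using assms by (auto simp: in_keys_iff)
  finally show ?thesis .
qed

lemma subst_monom_phi_subst: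
  assumes "s < i" "d = i \<or> d = Suc i"
  shows "subst_monom (phi_subst s i d) m
    = phi_subst s i d (Suc s) ^ Poly_Mapping.lookup m (Suc s) * phi_subst s i d (Suc i) ^ Poly_Mapping.lookup m (Suc i)
      * Poly_Mapping.single (rest_exp s i m) 1"
proof -
  let ?K = "Poly_Mapping.keys m \<union> {Suc s, Suc i}"
  let ?f = "\<lambda>k. phi_subst s i d k ^ Poly_Mapping.lookup m k"
  have "subst_monom (phi_subst s i d) m = prod ?f ?K"
    by (rule subst_monom_superset) auto
  also have "\<dots> = ?f (Suc s) * prod ?f (?K - {Suc s})"
    by (rule prod.remove) auto
  also have "prod ?f (?K - {Suc s}) = ?f (Suc i) * prod ?f (?K - {Suc s} - {Suc i})"
    by (rule prod.remove) (use assms(1) in auto)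
  also have "?K - {Suc s} - {Suc i} = Poly_Mapping.keys m - {Suc s, Suc i}"
    by auto
  also have "prod ?f (Poly_Mapping.keys m - {Suc s, Suc i}) = (\<Prod>k\<in>Poly_Mapping.keys m - {Suc s, Suc i}.
      Poly_Mapping.single (Poly_Mapping.single (phi_index s i k) (Poly_Mapping.lookup m k)) 1)"
  proof (rule prod.cong[OF refl])
    fix k assume "k \<in> Poly_Mapping.keys m - {Suc s, Suc i}"
    then show "?f k = Poly_Mapping.single (Poly_Mapping.single (phi_index s i k) (Poly_Mapping.lookup m k)) 1"
      using phi_subst_eq_phi_index[OF assms(1) _ _ assms(2), of k] by (simp add: Xv_power)
  qed
  also have "\<dots> = Poly_Mapping.single (rest_exp s i m) 1"
    unfolding rest_exp_def by (rule prod_single_one) simp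
  finally show ?thesis by (simp add: mult.assoc)
qed

lemma homogeneous_pair_monom:
  assumes "j = i \<or> j = Suc i"
  shows "homogeneous {i, Suc i} (a + b) ((Xv (Suc i) - Xv i) ^ a * Xv j ^ b)"
proof -
  have "subst (scale_subst {i, Suc i}) (Xv (Suc i) - Xv i) = 2 * (Xv (Suc i) - Xv i)"
    by (simp add: subst_diff scale_subst_mem right_diff_distrib)
  moreover have "subst (scale_subst {i, Suc i}) (Xv j) = 2 * Xv j"
    using assms by (auto simp: scale_subst_mem)
  ultimately have "subst (scale_subst {i, Suc i}) ((Xv (Suc i) - Xv i) ^ a * Xv j ^ b)
      = (2 * (Xv (Suc i) - Xv i)) ^ a * (2 * Xv j) ^ b"
    by (simp only: subst_mult subst_power)
  also have "\<dots> = 2 ^ (a + b) * ((Xv (Suc i) - Xv i) ^ a * Xv j ^ b)"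
    by (simp only: power_mult_distrib power_add ac_simps)
  also have "(2 :: qpoly) ^ (a + b) = const_poly (2 ^ (a + b))"
    by (simp add: const_poly_power[symmetric] numeral_2_eq_2 single_add[symmetric])
  finally show ?thesis
    by (simp add: homogeneous_iff_subst_scale)
qed

lemma rte_homogeneous_pair_mult_single:
  assumes G: "homogeneous {i, Suc i} e G"
    and \<mu>: "Poly_Mapping.lookup \<mu> i = 0" "Poly_Mapping.lookup \<mu> (Suc i) = 0"
    and i: "1 \<le> i" "Suc i \<le> r"
    and bad: "odd e \<or> (\<exists>t\<in>{1..r} - {i, Suc i}. odd (Poly_Mapping.lookup \<mu> t) \<or> Poly_Mapping.lookup \<mu> t < 2)"
  shows "rte r (G * Poly_Mapping.single \<mu> 1) = 0"
proof (rule rte_mult_single_eq_zero)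
  fix g assume "g \<in> Poly_Mapping.keys G"
  then have g_keys: "Poly_Mapping.keys g \<subseteq> {i, Suc i}"
    and g_deg: "Poly_Mapping.lookup g i + Poly_Mapping.lookup g (Suc i) = e"
    using G by (auto simp: homogeneous_def)
  from bad show "\<not> totally_even r (g + \<mu>)"
  proof
    assume "odd e"
    with g_deg obtain t where "t \<in> {i, Suc i}" "odd (Poly_Mapping.lookup g t)"
      by (metis even_add insertI1 insertI2 singletonI)
    moreover have "Poly_Mapping.lookup (g + \<mu>) t = Poly_Mapping.lookup g t" if "t \<in> {i, Suc i}" for t
      using that \<mu> by (auto simp: lookup_add)
    ultimately show ?thesis
      using i by (intro not_totally_evenI[of t]) auto
  next
    assume "\<exists>t\<in>{1..r} - {i, Suc i}. odd (Poly_Mapping.lookup \<mu> t) \<or> Poly_Mapping.lookup \<mu> t < 2"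
    then obtain t where t: "t \<in> {1..r}" "t \<notin> {i, Suc i}"
      and "odd (Poly_Mapping.lookup \<mu> t) \<or> Poly_Mapping.lookup \<mu> t < 2" by blast
    moreover have "Poly_Mapping.lookup g t = 0"
      using g_keys t(2) by (auto simp: in_keys_iff)
    ultimately show ?thesis
      by (intro not_totally_evenI[OF t(1)]) (simp add: lookup_add)
  qed
qed

lemma rte_Xv_power_mult_single:
  assumes "Poly_Mapping.lookup \<mu> i = 0" "Poly_Mapping.lookup \<mu> (Suc i) = 0"
    and "1 \<le> i" "Suc i \<le> r" "j = i \<or> j = Suc i"
  shows "rte r (Xv j ^ b * Poly_Mapping.single \<mu> 1) = 0"
proof (rule rte_mult_single_eq_zero)
  fix g assume "g \<in> Poly_Mapping.keys (Xv j ^ b)"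
  then have "Poly_Mapping.lookup (g + \<mu>) (if j = i then Suc i else i) = 0"
    using assms by (auto simp: Xv_power lookup_add lookup_single)
  then show "\<not> totally_even r (g + \<mu>)"
    using assms by (intro not_totally_evenI[of "if j = i then Suc i else i"]) auto
qed

lemma totally_even_by_rest_exp:
  assumes "s < i" "i < r"
    and rest: "\<forall>t\<in>{1..r} - {i, Suc i}. even (Poly_Mapping.lookup (rest_exp s i m) t)
                                    \<and> 2 \<le> Poly_Mapping.lookup (rest_exp s i m) t"
    and "even (Poly_Mapping.lookup m (Suc s))" "2 \<le> Poly_Mapping.lookup m (Suc s)"
    and "even (Poly_Mapping.lookup m (Suc i))" "2 \<le> Poly_Mapping.lookup m (Suc i)"
  shows "totally_even r m"
  unfolding totally_even_def
proof
  fix k assume k: "k \<in> {1..r}"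
  show "even (Poly_Mapping.lookup m k) \<and> 2 \<le> Poly_Mapping.lookup m k"
  proof (cases "k = Suc s \<or> k = Suc i")
    case False
    then have "phi_index s i k \<in> {1..r} - {i, Suc i}"
      using phi_index_range[OF assms(1,2) k] phi_index_neq[OF assms(1)] by auto
    with rest have "even (Poly_Mapping.lookup (rest_exp s i m) (phi_index s i k))
        \<and> 2 \<le> Poly_Mapping.lookup (rest_exp s i m) (phi_index s i k)"
      by blast
    with False show ?thesis
      by (simp add: lookup_rest_exp_phi_index[OF assms(1)])
  qed (use assms in auto)
qed

lemma rte_subst_monom_phi_subst_eq:
  assumes si: "s < i" and ir: "i < r"
    and not_even: "\<not> totally_even r m" and even_s: "even (Poly_Mapping.lookup m (Suc s))"
  shows "rte r (subst_monom (phi_subst s i (Suc i)) m) = rte r (subst_monom (phi_subst s i i) m)"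
proof -
  define a where "a = Poly_Mapping.lookup m (Suc s)"
  define b where "b = Poly_Mapping.lookup m (Suc i)"
  define \<mu> where "\<mu> = rest_exp s i m"
  define D where "D = Xv (Suc i) - Xv i"
  have monom: "subst_monom (phi_subst s i (Suc i)) m = (D ^ a * Xv i ^ b) * Poly_Mapping.single \<mu> 1"
    "subst_monom (phi_subst s i i) m = (D ^ a * Xv (Suc i) ^ b) * Poly_Mapping.single \<mu> 1"
    using si by (simp_all add: subst_monom_phi_subst a_def b_def \<mu>_def D_def phi_subst_def)
  have \<mu>: "Poly_Mapping.lookup \<mu> i = 0" "Poly_Mapping.lookup \<mu> (Suc i) = 0"
    unfolding \<mu>_def using lookup_rest_exp_pair[OF si] by simp_all
  have i: "1 \<le> i" "Suc i \<le> r" using si ir by auto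
  consider (vanish) "odd (a + b) \<or> (\<exists>t\<in>{1..r} - {i, Suc i}. odd (Poly_Mapping.lookup \<mu> t) \<or> Poly_Mapping.lookup \<mu> t < 2)"
    | (b_zero) "b = 0"
    | (a_zero) "a = 0" "2 \<le> b"
  proof (cases "odd (a + b) \<or> (\<exists>t\<in>{1..r} - {i, Suc i}. odd (Poly_Mapping.lookup \<mu> t) \<or> Poly_Mapping.lookup \<mu> t < 2)")
    case False
    then have "even b" using even_s a_def by auto
    moreover have "a = 0" if "2 \<le> b"
    proof -
      have "\<not> 2 \<le> a"
        using totally_even_by_rest_exp[OF si ir, of m] False not_even even_s \<open>even b\<close> that
        unfolding a_def b_def \<mu>_def by (auto simp: not_less)
      with even_s show ?thesis
        unfolding a_def by presburger
    qed
    ultimately show ?thesis using that by (cases "b = 0") auto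
  qed (use that in blast)
  then show ?thesis
  proof cases
    case vanish
    then show ?thesis
      unfolding monom D_def
      using rte_homogeneous_pair_mult_single[OF homogeneous_pair_monom \<mu> i] by simp
  next
    case b_zero
    then show ?thesis unfolding monom by simp
  next
    case a_zero
    with \<mu> i show ?thesis unfolding monom by (simp add: rte_Xv_power_mult_single)
  qed
qed

lemma rte_subst:
  "rte r (subst \<sigma> Z) = (\<Sum>m\<in>Poly_Mapping.keys Z. const_poly (Poly_Mapping.lookup Z m) * rte r (subst_monom \<sigma> m))"
  by (simp add: subst_eq_sum_monom rte_sum rte_const_mult)

lemma rte_psi_rte:
  assumes "Suc s < r" and even: "even_in (Suc s) X"
  shows "rte r (psi s r (rte r X)) = rte r (psi s r X)"
proof -
  define Z where "Z = X - rte r X"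
  have Z_keys: "\<not> totally_even r m \<and> even (Poly_Mapping.lookup m (Suc s))" if "m \<in> Poly_Mapping.keys Z" for m
  proof -
    from that have "\<not> totally_even r m" "m \<in> Poly_Mapping.keys X"
      by (auto simp: Z_def in_keys_iff lookup_minus lookup_rte split: if_splits)
    with even show ?thesis by (auto simp: even_in_def)
  qed
  have "rte r (psi_term s i Z) = 0" if "i \<in> {Suc s..r - 1}" for i
  proof -
    have "s < i" "i < r" using that assms(1) by auto
    then have "rte r (subst (phi_subst s i (Suc i)) Z) = rte r (subst (phi_subst s i i) Z)"
      unfolding rte_subst using Z_keys rte_subst_monom_phi_subst_eq by (intro sum.cong) auto
    then show ?thesis by (simp add: psi_term_def rte_diff)
  qed
  moreover have "rte r Z = 0"
    by (simp add: Z_def rte_diff)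
  ultimately have "rte r (psi s r Z) = 0"
    by (simp add: psi_def rte_add rte_sum)
  then show ?thesis
    by (simp add: Z_def psi_diff rte_diff)
qed

section \<open>The space \<open>V\<close>\<close>

lemma lookup_mono_exp:
  "Poly_Mapping.lookup (mono_exp n) k = (if 1 \<le> k \<and> k \<le> length n then n ! (k - 1) - 1 else 0)"
proof -
  have "Poly_Mapping.lookup (mono_exp n) k = (\<Sum>i<length n. if i + 1 = k then n ! i - 1 else 0)"
    unfolding mono_exp_def lookup_sum by (auto simp: lookup_single when_def intro!: sum.cong)
  also have "\<dots> = (if 1 \<le> k \<and> k \<le> length n then n ! (k - 1) - 1 else 0)"
    by (cases k) (auto simp: sum.delta)
  finally show ?thesis .
qed

lemma sum_upto_shift: "(\<Sum>k\<in>{1..r}. f k) = (\<Sum>i<r. f (Suc i) :: nat)"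
  by (simp add: sum.atLeast1_atMost_eq)

lemma mono_exp_of_S:
  assumes "n \<in> S N r"
  shows "Poly_Mapping.keys (mono_exp n) \<subseteq> {1..r}" "totally_even r (mono_exp n)"
    "(\<Sum>k\<in>{1..r}. Poly_Mapping.lookup (mono_exp n) k) + r = N"
proof -
  from assms have n: "length n = r" "sum_list n = N" "\<And>i. i < r \<Longrightarrow> odd (n ! i) \<and> 3 \<le> n ! i"
    by (auto simp: S_def)
  have lookup: "Poly_Mapping.lookup (mono_exp n) k = (if 1 \<le> k \<and> k \<le> r then n ! (k - 1) - 1 else 0)" for k
    by (simp add: lookup_mono_exp n(1))
  show "Poly_Mapping.keys (mono_exp n) \<subseteq> {1..r}"
    by (auto simp: in_keys_iff lookup split: if_splits)
  show "totally_even r (mono_exp n)"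
    unfolding totally_even_def
  proof
    fix k assume "k \<in> {1..r}"
    then have "k - 1 < r" by auto
    with n(3) have "odd (n ! (k - 1))" "3 \<le> n ! (k - 1)" by auto
    with \<open>k \<in> {1..r}\<close> show "even (Poly_Mapping.lookup (mono_exp n) k) \<and> 2 \<le> Poly_Mapping.lookup (mono_exp n) k"
      by (simp add: lookup)
  qed
  have "(\<Sum>k\<in>{1..r}. Poly_Mapping.lookup (mono_exp n) k) + r = (\<Sum>i<r. (n ! i - 1) + 1)"
    unfolding sum_upto_shift by (simp add: lookup sum_Suc)
  also have "\<dots> = N"
    using n by (simp add: sum_list_sum_nth atLeast0LessThan)
  finally show "(\<Sum>k\<in>{1..r}. Poly_Mapping.lookup (mono_exp n) k) + r = N" .
qed

lemma mem_mono_exp_S: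
  assumes keys: "Poly_Mapping.keys m \<subseteq> {1..r}" and even: "totally_even r m"
    and deg: "(\<Sum>k\<in>{1..r}. Poly_Mapping.lookup m k) + r = N"
  shows "m \<in> mono_exp ` S N r"
proof -
  define n where "n = map (\<lambda>i. Poly_Mapping.lookup m (Suc i) + 1) [0..<r]"
  have "sum_list n = (\<Sum>i<r. Poly_Mapping.lookup m (Suc i) + 1)"
    by (simp add: n_def sum_list_sum_nth atLeast0LessThan)
  also have "\<dots> = N"
    using deg unfolding sum_upto_shift by (simp add: sum_Suc)
  finally have "n \<in> S N r"
    using even by (auto simp: S_def n_def totally_even_def Suc_le_eq)
  moreover have "m = mono_exp n"
  proof (rule poly_mapping_eqI)
    fix k
    show "Poly_Mapping.lookup m k = Poly_Mapping.lookup (mono_exp n) k"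
      using keys by (cases k) (auto simp: lookup_mono_exp n_def in_keys_iff)
  qed
  ultimately show ?thesis by blast
qed

lemma mem_mono_exp_S_iff:
  "m \<in> mono_exp ` S N r \<longleftrightarrow> Poly_Mapping.keys m \<subseteq> {1..r} \<and> totally_even r m
     \<and> (\<Sum>k\<in>{1..r}. Poly_Mapping.lookup m k) + r = N"
  using mono_exp_of_S mem_mono_exp_S by blast

lemma mem_V_iff:
  "P \<in> V N r \<longleftrightarrow> (\<forall>m\<in>Poly_Mapping.keys P. Poly_Mapping.keys m \<subseteq> {1..r} \<and> totally_even r m
     \<and> (\<Sum>k\<in>{1..r}. Poly_Mapping.lookup m k) + r = N)"
  by (simp add: V_def subset_eq mem_mono_exp_S_iff del: atLeastAtMost_iff)

lemma V_imp_homogeneous: "P \<in> V N r \<Longrightarrow> homogeneous {1..r} (N - r) P"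
  by (auto simp: mem_V_iff homogeneous_def)

lemma rte_V: "P \<in> V N r \<Longrightarrow> rte r P = P"
  by (rule poly_mapping_eqI) (auto simp: lookup_rte mem_V_iff in_keys_iff)

lemma V_imp_even_in: "P \<in> V N r \<Longrightarrow> v \<in> {1..r} \<Longrightarrow> even_in v P"
  by (auto simp: mem_V_iff even_in_def totally_even_def)

lemma rte_mem_V:
  assumes "1 \<le> r" "homogeneous {1..r} (N - r) Q"
  shows "rte r Q \<in> V N r"
  unfolding V_def
proof safe
  fix m assume "m \<in> Poly_Mapping.keys (rte r Q)"
  then have even: "totally_even r m" and "m \<in> Poly_Mapping.keys Q"
    by (auto simp: in_keys_iff lookup_rte split: if_splits)
  then have keys: "Poly_Mapping.keys m \<subseteq> {1..r}" and deg: "(\<Sum>k\<in>{1..r}. Poly_Mapping.lookup m k) = N - r"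
    using assms(2) by (auto simp: homogeneous_def)
  have "2 \<le> Poly_Mapping.lookup m 1"
    using even assms(1) by (auto simp: totally_even_def)
  also have "\<dots> \<le> (\<Sum>k\<in>{1..r}. Poly_Mapping.lookup m k)"
    using assms(1) by (intro member_le_sum) auto
  finally have "r \<le> N" using deg by simp
  with keys even deg show "m \<in> mono_exp ` S N r"
    by (simp add: mem_mono_exp_S_iff)
qed

section \<open>Iterating \<open>\<psi>\<close>\<close>

definition psi_chain :: "nat \<Rightarrow> qpoly \<Rightarrow> nat \<Rightarrow> qpoly" where
  "psi_chain r P k = fold (\<lambda>j. psi (r - j) r) [2..<Suc k] P"

lemma psi_chain_one: "psi_chain r P 1 = P"
  by (simp add: psi_chain_def)

lemma psi_chain_Suc: "1 \<le> k \<Longrightarrow> psi_chain r P (Suc k) = psi (r - Suc k) r (psi_chain r P k)"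
  by (simp add: psi_chain_def)

lemma even_in_psi_chain:
  assumes "even_in v P" "1 \<le> k" "v \<le> r - k"
  shows "even_in v (psi_chain r P k)"
  using assms(2,3)
proof (induction k rule: nat_induct_at_least)
  case base
  then show ?case by (simp only: psi_chain_one assms(1))
next
  case (Suc k)
  then show ?case
    unfolding psi_chain_Suc[OF Suc.hyps] by (intro psi_even_in) auto
qed

lemma homogeneous_psi_chain:
  assumes "homogeneous {1..r} e P" "1 \<le> k"
  shows "homogeneous {1..r} e (psi_chain r P k)"
  using assms(2)
proof (induction k rule: nat_induct_at_least)
  case base
  then show ?case by (simp only: psi_chain_one assms(1))
next
  case (Suc k)
  then show ?case
    unfolding psi_chain_Suc[OF Suc.hyps] by (intro psi_homogeneous) auto
qed

lemma W_rel_antisymmetric12_psi_chain: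
  assumes "W_rel P" "antisymmetric12 P" "1 \<le> k" "k + 2 \<le> r"
  shows "W_rel (psi_chain r P k) \<and> antisymmetric12 (psi_chain r P k)"
  using assms(3,4)
proof (induction k rule: nat_induct_at_least)
  case base
  then show ?case by (simp only: psi_chain_one assms(1,2))
next
  case (Suc k)
  then show ?case
    unfolding psi_chain_Suc[OF Suc.hyps] by (intro conjI psi_W_rel psi_antisymmetric12) auto
qed

lemma fold_phi_eq_rte_psi_chain:
  assumes P: "P \<in> V N r" and "1 \<le> k" "k < r"
  shows "fold (\<lambda>j. phi r j) [2..<Suc k] P = rte r (psi_chain r P k)"
  using assms(2,3)
proof (induction k rule: nat_induct_at_least)
  case base
  then show ?case by (simp only: psi_chain_one rte_V[OF P]) simp
next
  case (Suc k)
  have "even_in (r - k) (psi_chain r P k)"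
    using Suc by (intro even_in_psi_chain V_imp_even_in[OF P]) auto
  then have "rte r (psi (r - Suc k) r (rte r (psi_chain r P k))) = rte r (psi_chain r P (Suc k))"
    using Suc by (simp add: rte_psi_rte Suc_diff_Suc psi_chain_Suc)
  with Suc show ?case
    by (simp add: phi_eq_rte_psi)
qed

lemma phi_comp_eq_rte_psi_chain:
  assumes "P \<in> V N r" "2 \<le> r"
  shows "phi_comp r P = rte r (psi_chain r P (r - 1))"
  using fold_phi_eq_rte_psi_chain[OF assms(1), of "r - 1"] assms(2)
  by (simp add: phi_comp_def Suc_diff_Suc)

lemma psi_chain_last:
  assumes "3 \<le> r"
  shows "psi_chain r P (r - 1) = psi 1 r (psi_chain r P (r - 2))"
proof -
  have "r - 1 = Suc (r - 2)" "r - Suc (r - 2) = 1" using assms by auto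
  then show ?thesis
    using psi_chain_Suc[of "r - 2" r P] assms by simp
qed

theorem lemma4p11:
  fixes N r :: nat
  assumes "3 \<le> r"
  shows "phi_comp r ` W N r \<subseteq> {Q \<in> V N r. phi r r Q = 0} \<inter> phi_comp r ` V N r"
proof
  fix Q assume "Q \<in> phi_comp r ` W N r"
  then obtain P where P: "P \<in> W N r" and Q: "Q = phi_comp r P" by blast
  have PV: "P \<in> V N r" using P by (simp add: W_def)
  define Y where "Y = psi_chain r P (r - 2)"
  have "2 \<le> r" using assms by simp
  then have Q_eq: "Q = rte r (psi 1 r Y)"
    unfolding Q phi_comp_eq_rte_psi_chain[OF PV \<open>2 \<le> r\<close>] psi_chain_last[OF assms] Y_def by simp
  have "W_rel Y \<and> antisymmetric12 Y"
    unfolding Y_def using assms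
    by (intro W_rel_antisymmetric12_psi_chain W_imp_W_rel[OF P] W_rel_imp_antisymmetric12
        V_imp_even_in[OF PV]) auto
  then have "psi 0 r (psi 1 r Y) = 0"
    using assms by (intro psi0_psi1_eq_zero) auto
  moreover have "even_in 1 (psi 1 r Y)"
    unfolding Y_def psi_chain_last[OF assms, symmetric] using assms
    by (intro even_in_psi_chain V_imp_even_in[OF PV]) auto
  ultimately have "phi r r Q = 0"
    using assms by (simp add: Q_eq phi_eq_rte_psi rte_psi_rte)
  moreover have "Q \<in> V N r"
    unfolding Q_eq Y_def psi_chain_last[OF assms, symmetric] using assms
    by (intro rte_mem_V homogeneous_psi_chain V_imp_homogeneous[OF PV]) auto
  ultimately show "Q \<in> {Q \<in> V N r. phi r r Q = 0} \<inter> phi_comp r ` V N r"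
    using Q PV by blast
qed

end
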